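(* Let $n\ge2$, let $(e_1,\dots,e_n)$ be the canonical basis of $\mathbb{R}^n$, let $E_{i,j}$ be the $n\times n$ matrix with $1$ in row $i$, column $j$ and $0$ elsewhere, and let $(E_{i,j}^* )$ be the dual basis of $\mathfrak{gl}(n,\mathbb{R})^*$. Define $\mathfrak{h}=\{A\in\mathfrak{sl}(n,\mathbb{R}):\exists\lambda\in\mathbb{R},\ A e_n=\lambda e_n\}$ and, for $\alpha=1,\dots,n$, the 2-form $\theta_\alpha$ on $\mathfrak{sl}(n,\mathbb{R})$ by $\theta_\alpha(A,B)=-E_{\alpha,n}^*([A,B])$ (the restriction of $dE^*_{\alpha,n}$). Then $(\mathfrak{h},\theta_1,\dots,\theta_n)$ is an $n$-symplectic structure on $\mathfrak{sl}(n,\mathbb{R})$ (here $\dim\mathfrak{sl}(n,\mathbb{R})=(n-1)(n+1)$ and $\dim\mathfrak{h}=n(n-1)$).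
   Context: A $k$-symplectic structure on a real Lie algebra $\mathfrak{g}$ of dimension $m(k+1)$ ($m,k\ge1$) is a pair consisting of a Lie subalgebra $\mathfrak{h}\subset\mathfrak{g}$ of dimension $mk$ and a family $(\theta_1,\dots,\theta_k)$ of skew-symmetric bilinear forms on $\mathfrak{g}$ such that: (i) $\bigcap_{i=1}^k\ker\theta_i=\{0\}$, where $\ker\theta_i=\{u\in\mathfrak{g}:\theta_i(u,v)=0\ \forall v\in\mathfrak{g}\}$; (ii) each $\theta_i$ is a 2-cocycle: $\theta_i([u,v],w)+\theta_i([v,w],u)+\theta_i([w,u],v)=0$ for all $u,v,w$; (iii) $\theta_i(u,v)=0$ for all $u,v\in\mathfrak{h}$ and all $i$. *)

theory Defs
  imports "HOL-Analysis.Analysis"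
begin

definition is_lie_algebra :: "'v::real_vector set \<Rightarrow> ('v \<Rightarrow> 'v \<Rightarrow> 'v) \<Rightarrow> bool" where
  "is_lie_algebra g br \<longleftrightarrow> subspace g
     \<and> (\<forall>u\<in>g. \<forall>v\<in>g. br u v \<in> g)
     \<and> (\<forall>a. \<forall>u\<in>g. \<forall>v\<in>g. \<forall>w\<in>g. br (a *\<^sub>R u + v) w = a *\<^sub>R br u w + br v w)
     \<and> (\<forall>u\<in>g. \<forall>v\<in>g. br u v = - br v u)
     \<and> (\<forall>u\<in>g. \<forall>v\<in>g. \<forall>w\<in>g. br u (br v w) + br v (br w u) + br w (br u v) = 0)"

definition lie_subalgebra :: "'v::real_vector set \<Rightarrow> 'v set \<Rightarrow> ('v \<Rightarrow> 'v \<Rightarrow> 'v) \<Rightarrow> bool" where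
  "lie_subalgebra h g br \<longleftrightarrow> h \<subseteq> g \<and> subspace h \<and> (\<forall>u\<in>h. \<forall>v\<in>h. br u v \<in> h)"

definition skew_bilinear_on :: "'v::real_vector set \<Rightarrow> ('v \<Rightarrow> 'v \<Rightarrow> real) \<Rightarrow> bool" where
  "skew_bilinear_on g t \<longleftrightarrow>
     (\<forall>a. \<forall>u\<in>g. \<forall>v\<in>g. \<forall>w\<in>g. t (a *\<^sub>R u + v) w = a * t u w + t v w)
     \<and> (\<forall>u\<in>g. \<forall>v\<in>g. t u v = - t v u)"

definition form_kernel :: "'v::real_vector set \<Rightarrow> ('v \<Rightarrow> 'v \<Rightarrow> real) \<Rightarrow> 'v set" where
  "form_kernel g t = {u\<in>g. \<forall>v\<in>g. t u v = 0}"

definition is_2cocycle :: "'v::real_vector set \<Rightarrow> ('v \<Rightarrow> 'v \<Rightarrow> 'v) \<Rightarrow> ('v \<Rightarrow> 'v \<Rightarrow> real) \<Rightarrow> bool" where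
  "is_2cocycle g br t \<longleftrightarrow>
     (\<forall>u\<in>g. \<forall>v\<in>g. \<forall>w\<in>g. t (br u v) w + t (br v w) u + t (br w u) v = 0)"

definition k_symplectic :: "'v::real_vector set \<Rightarrow> ('v \<Rightarrow> 'v \<Rightarrow> 'v) \<Rightarrow> nat \<Rightarrow>
    'v set \<Rightarrow> ('i \<Rightarrow> 'v \<Rightarrow> 'v \<Rightarrow> real) \<Rightarrow> 'i set \<Rightarrow> bool" where
  "k_symplectic g br k h \<theta> I \<longleftrightarrow>
     is_lie_algebra g br \<and> finite I \<and> card I = k \<and> k \<ge> 1
     \<and> (\<exists>m::nat. m \<ge> 1 \<and> dim g = m * (k + 1) \<and> dim h = m * k)
     \<and> lie_subalgebra h g br
     \<and> (\<forall>i\<in>I. skew_bilinear_on g (\<theta> i))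
     \<and> (\<Inter>i\<in>I. form_kernel g (\<theta> i)) = {0}
     \<and> (\<forall>i\<in>I. is_2cocycle g br (\<theta> i))
     \<and> (\<forall>i\<in>I. \<forall>u\<in>h. \<forall>v\<in>h. \<theta> i u v = 0)"

text \<open>Matrices in real^'n^'n; the index type 'n is ordered, and its greatest
  element plays the role of the last index n.\<close>
definition sl :: "(real^'n^'n) set" where
  "sl = {A. trace A = 0}"

definition mbr :: "real^'n^'n \<Rightarrow> real^'n^'n \<Rightarrow> real^'n^'n" where
  "mbr A B = A ** B - B ** A"

definition lastidx :: "'n::{finite,linorder}" where
  "lastidx = Max (UNIV :: 'n set)"

definition sl_h :: "((real, 'n::{finite,linorder}) vec, 'n) vec set" where
  "sl_h = {A\<in>sl. \<exists>c::real. A *v axis lastidx 1 = c *\<^sub>R axis lastidx 1}"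

definition sl_theta ::
   "'n::{finite,linorder} \<Rightarrow> ((real, 'n) vec, 'n) vec \<Rightarrow> ((real, 'n) vec, 'n) vec \<Rightarrow> real" where
  "sl_theta \<alpha> A B = - (mbr A B $ \<alpha> $ lastidx)"

end

theory Submission imports Defs begin

text \<open>The forms \<open>\<theta>\<^sub>\<alpha>\<close> are coboundaries of the linear functionals \<open>-E\<^sup>*\<^sub>\<alpha>\<^sub>n\<close>, hence 2-cocycles
  by the Jacobi identity. Their common kernel is trivial: pairing \<open>A\<close> with the matrix units
  \<open>E\<^sub>b\<^sub>n\<close> and \<open>E\<^sub>n\<^sub>a\<close> shows that \<open>A\<close> is scalar, and a traceless scalar matrix is zero.
  The subalgebra \<open>\<frak>h\<close>, the stabiliser of the line \<open>\<real>e\<^sub>n\<close>, is isotropic because a commutator of two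
  matrices with common eigenvector \<open>e\<^sub>n\<close> kills \<open>e\<^sub>n\<close>. Finally \<open>\<frak>sl(n)\<close> and \<open>\<frak>h\<close> are the orthogonal
  complements (for the Frobenius inner product) of the orthogonal families \<open>{I}\<close> and
  \<open>{I} \<union> {E\<^sub>i\<^sub>n | i \<noteq> n}\<close>, giving dimensions \<open>n\<^sup>2 - 1 = (n-1)(n+1)\<close> and \<open>n\<^sup>2 - n = (n-1)n\<close>.\<close>

definition matrix_unit :: "'n::finite \<Rightarrow> 'n \<Rightarrow> real^'n^'n" where
  "matrix_unit i j = (\<chi> a b. if a = i \<and> b = j then 1 else 0)"

lemma matrix_unit_nth [simp]: "matrix_unit i j $ a $ b = (if a = i \<and> b = j then 1 else 0)"
  by (simp add: matrix_unit_def)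

lemma matrix_unit_neq_0: "matrix_unit i j \<noteq> 0"
proof
  assume "matrix_unit i j = 0"
  then have "matrix_unit i j $ i $ j = 0" by simp
  then show False by simp
qed

lemma mat_nth [simp]: "mat c $ i $ j = (if i = j then c else 0)"
  by (simp add: mat_def)

lemma mat_1_neq_0: "(mat 1 :: real^'n^'n) \<noteq> 0"
  by (auto simp: vec_eq_iff)

lemma inner_matrix_unit: "matrix_unit i j \<bullet> (A::real^'n^'n) = A $ i $ j"
proof -
  have "(\<Sum>b\<in>UNIV. matrix_unit i j $ a $ b * A $ a $ b) = (if a = i then A $ a $ j else 0)" for a
    by (simp add: if_distrib if_distribR cong: if_cong)
  then show ?thesis by (simp add: inner_vec_def)
qed

lemma inner_mat_1: "mat 1 \<bullet> (A::real^'n^'n) = trace A"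
proof -
  have "(\<Sum>b\<in>UNIV. mat 1 $ a $ b * A $ a $ b) = A $ a $ a" for a
    by (simp add: if_distrib if_distribR cong: if_cong)
  then show ?thesis by (simp add: inner_vec_def trace_def)
qed

lemma trace_matrix_unit: "i \<noteq> j \<Longrightarrow> trace (matrix_unit i j :: real^'n^'n) = 0"
  by (auto simp: trace_def intro: sum.neutral)

lemma matrix_vector_mult_axis_nth: "((A::real^'n^'n) *v axis j 1) $ i = A $ i $ j"
  by (simp add: matrix_vector_mult_def axis_def if_distrib cong: if_cong)

lemma matrix_mult_matrix_unit_nth:
  "((A::real^'n^'n) ** matrix_unit i j) $ a $ b = (if b = j then A $ a $ i else 0)"
  by (simp add: matrix_matrix_mult_def matrix_unit_def if_distrib cong: if_cong)

lemma matrix_unit_mult_nth: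
  "(matrix_unit i j ** (A::real^'n^'n)) $ a $ b = (if a = i then A $ j $ b else 0)"
  by (simp add: matrix_matrix_mult_def matrix_unit_def if_distrib if_distribR cong: if_cong)

lemma mbr_matrix_unit_nth:
  "mbr (A::real^'n^'n) (matrix_unit i j) $ a $ b
     = (if b = j then A $ a $ i else 0) - (if a = i then A $ j $ b else 0)"
  by (simp add: mbr_def matrix_mult_matrix_unit_nth matrix_unit_mult_nth)

lemma mbr_add_scaleR_left: "mbr (c *\<^sub>R A + B) C = c *\<^sub>R mbr A C + mbr B (C::real^'n^'n)"
  by (simp add: mbr_def vec_eq_iff matrix_matrix_mult_def sum.distrib sum_distrib_left
      algebra_simps sum_subtractf)

lemma mbr_skew: "mbr A B = - mbr B A"
  by (simp add: mbr_def)

lemma mbr_jacobi: "mbr A (mbr B C) + mbr B (mbr C A) + mbr C (mbr A B) = (0::real^'n^'n)"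
proof -
  have diff_left: "X ** (Y - Z) = X ** Y - X ** Z"
    and diff_right: "(Y - Z) ** X = Y ** X - Z ** X" for X Y Z :: "real^'n^'n"
    by (simp_all add: vec_eq_iff matrix_matrix_mult_def sum_subtractf algebra_simps)
  show ?thesis
    unfolding mbr_def diff_left diff_right matrix_mul_assoc
    by (simp add: diff_add_eq add_diff_eq diff_diff_eq2 diff_eq_eq eq_diff_eq)
qed

lemma trace_mbr: "trace (mbr (A::real^'n^'n) B) = 0"
  by (simp add: mbr_def trace_sub trace_mul_sym[of A B])

lemma subspace_sl: "subspace (sl :: (real^'n^'n) set)"
  by (simp add: subspace_def sl_def trace_def sum.distrib sum_distrib_left[symmetric])

lemma is_lie_algebra_sl: "is_lie_algebra (sl :: (real^'n^'n) set) mbr"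
  unfolding is_lie_algebra_def
  using subspace_sl mbr_add_scaleR_left mbr_skew mbr_jacobi by (auto simp: sl_def trace_mbr)

lemma skew_bilinear_on_coboundary:
  assumes "is_lie_algebra g br" "linear f"
  shows "skew_bilinear_on g (\<lambda>u v. f (br u v))"
  unfolding skew_bilinear_on_def
proof (intro conjI allI ballI)
  fix c u v w assume "u \<in> g" "v \<in> g" "w \<in> g"
  then have "br (c *\<^sub>R u + v) w = c *\<^sub>R br u w + br v w"
    using assms(1) unfolding is_lie_algebra_def by blast
  then show "f (br (c *\<^sub>R u + v) w) = c * f (br u w) + f (br v w)"
    using assms(2) by (simp add: linear_add linear_scale)
next
  fix u v assume "u \<in> g" "v \<in> g"
  then have "br u v = - br v u"
    using assms(1) unfolding is_lie_algebra_def by blast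
  then show "f (br u v) = - f (br v u)"
    using assms(2) by (simp add: linear_neg)
qed

lemma is_2cocycle_coboundary:
  assumes lie: "is_lie_algebra g br" and f: "linear f"
  shows "is_2cocycle g br (\<lambda>u v. f (br u v))"
  unfolding is_2cocycle_def
proof (intro ballI)
  fix u v w assume g: "u \<in> g" "v \<in> g" "w \<in> g"
  have "br u v \<in> g" "br v w \<in> g" "br w u \<in> g"
    using lie g unfolding is_lie_algebra_def by blast+
  then have "br (br u v) w = - br w (br u v)" "br (br v w) u = - br u (br v w)"
      "br (br w u) v = - br v (br w u)"
    using lie g unfolding is_lie_algebra_def by blast+
  moreover have "br w (br u v) + br u (br v w) + br v (br w u) = 0"
    using lie g unfolding is_lie_algebra_def by blast
  ultimately have "br (br u v) w + br (br v w) u + br (br w u) v = 0"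
    by (metis add.assoc minus_add_distrib minus_zero)
  then show "f (br (br u v) w) + f (br (br v w) u) + f (br (br w u) v) = 0"
    using f by (metis linear_add linear_0)
qed

lemma linear_neg_entry: "linear (\<lambda>M::real^'n^'n. - (M $ i $ j))"
  by (rule linearI) simp_all

lemma dim_orthogonal_complement:
  fixes S :: "'a::euclidean_space set"
  assumes orth: "pairwise orthogonal S" and nz: "0 \<notin> S"
  shows "dim {y. \<forall>x\<in>S. x \<bullet> y = 0} = DIM('a) - card S"
proof -
  have "{y. \<forall>x\<in>S. x \<bullet> y = 0} = {y \<in> UNIV. \<forall>x \<in> span S. orthogonal x y}"
    using orthogonal_to_span span_base
    by (fastforce simp: orthogonal_def inner_commute)
  moreover have "dim {y \<in> UNIV. \<forall>x \<in> span S. orthogonal x y} + dim (span S) = DIM('a)"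
    using dim_subspace_orthogonal_to_vectors[of "span S" UNIV] by simp
  moreover have "dim (span S) = card S"
    using dim_span_eq_card_independent pairwise_orthogonal_independent[OF orth nz] by blast
  ultimately show ?thesis by simp
qed

lemma sl_eq_orthogonal_complement: "sl = {A::real^'n^'n. \<forall>X\<in>{mat 1}. X \<bullet> A = 0}"
  by (simp add: sl_def inner_mat_1)

lemma dim_sl: "dim (sl :: (real^'n^'n) set) = CARD('n) * CARD('n) - 1"
  unfolding sl_eq_orthogonal_complement using mat_1_neq_0
  by (subst dim_orthogonal_complement) (simp_all add: pairwise_def)

lemma sl_h_iff:
  "A \<in> sl_h \<longleftrightarrow> A \<in> sl \<and> (\<forall>i. i \<noteq> lastidx \<longrightarrow> A $ i $ lastidx = 0)"
proof -
  have "(\<exists>c. A *v axis lastidx 1 = c *\<^sub>R axis lastidx 1)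
      \<longleftrightarrow> (\<forall>i. i \<noteq> lastidx \<longrightarrow> A $ i $ lastidx = 0)"
  proof
    assume "\<exists>c. A *v axis lastidx 1 = c *\<^sub>R axis lastidx 1"
    then obtain c where "A *v axis lastidx 1 = c *\<^sub>R axis lastidx 1" ..
    then have "A $ i $ lastidx = (c *\<^sub>R axis lastidx 1) $ i" for i
      by (metis matrix_vector_mult_axis_nth)
    then show "\<forall>i. i \<noteq> lastidx \<longrightarrow> A $ i $ lastidx = 0"
      by (simp add: axis_def)
  next
    assume "\<forall>i. i \<noteq> lastidx \<longrightarrow> A $ i $ lastidx = 0"
    then have "A *v axis lastidx 1 = A $ lastidx $ lastidx *\<^sub>R axis lastidx 1"
      unfolding vec_eq_iff matrix_vector_mult_axis_nth by (simp add: axis_def)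
    then show "\<exists>c. A *v axis lastidx 1 = c *\<^sub>R axis lastidx 1" ..
  qed
  then show ?thesis by (simp add: sl_h_def)
qed

lemma sl_h_eq_orthogonal_complement:
  "sl_h = {A. \<forall>X \<in> insert (mat 1) ((\<lambda>i. matrix_unit i lastidx) ` (- {lastidx})). X \<bullet> A = 0}"
  by (auto simp: sl_h_iff sl_def inner_mat_1 inner_matrix_unit)

lemma dim_sl_h:
  "dim (sl_h :: ((real, 'n::{finite,linorder}) vec, 'n) vec set) = CARD('n) * CARD('n) - CARD('n)"
proof -
  let ?n = "lastidx :: 'n"
  let ?E = "(\<lambda>i. matrix_unit i ?n) ` (- {?n})"
  have "mat 1 \<notin> ?E"
  proof
    assume "mat 1 \<in> ?E"
    then obtain i where "i \<noteq> ?n" "mat 1 = matrix_unit i ?n" by blast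
    from \<open>i \<noteq> ?n\<close> have "mat 1 $ i $ i \<noteq> (matrix_unit i ?n :: ((real, 'n) vec, 'n) vec) $ i $ i"
      by simp
    with \<open>mat 1 = matrix_unit i ?n\<close> show False by simp
  qed
  moreover have "inj_on (\<lambda>i. matrix_unit i ?n) (- {?n})"
    by (rule inj_onI) (metis matrix_unit_nth zero_neq_one)
  ultimately have card: "card (insert (mat 1) ?E) = CARD('n)"
    by (simp add: card_image Compl_eq_Diff_UNIV card_Diff_singleton finite_UNIV_card_ge_0 Suc_diff_1)
  have orth: "pairwise orthogonal (insert (mat 1) ?E)"
    by (auto simp: pairwise_def orthogonal_def inner_matrix_unit inner_mat_1 trace_matrix_unit)
  have nonzero: "0 \<notin> insert (mat 1) ?E"
    using mat_1_neq_0 matrix_unit_neq_0 by (metis imageE insertE)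
  show ?thesis
    unfolding sl_h_eq_orthogonal_complement dim_orthogonal_complement[OF orth nonzero] card
    by simp
qed

lemma mbr_mult_common_eigenvector:
  assumes "A *v x = a *\<^sub>R x" "B *v x = b *\<^sub>R x"
  shows "mbr A B *v x = 0"
  by (simp add: mbr_def matrix_vector_mult_diff_rdistrib matrix_vector_mul_assoc[symmetric]
      assms matrix_vector_mult_scaleR)

lemma mbr_sl_h_mult_axis: "A \<in> sl_h \<Longrightarrow> B \<in> sl_h \<Longrightarrow> mbr A B *v axis lastidx 1 = 0"
  unfolding sl_h_def using mbr_mult_common_eigenvector by blast

lemma lie_subalgebra_sl_h: "lie_subalgebra sl_h sl mbr"
  unfolding lie_subalgebra_def
proof (intro conjI ballI)
  show "sl_h \<subseteq> sl"
    by (auto simp: sl_h_iff)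
  show "subspace sl_h"
    by (simp add: sl_h_eq_orthogonal_complement subspace_def inner_add_right)
  show "mbr A B \<in> sl_h" if "A \<in> sl_h" "B \<in> sl_h" for A B
    using mbr_sl_h_mult_axis[OF that] by (simp add: sl_h_def sl_def trace_mbr exI[of _ 0])
qed

lemma sl_theta_sl_h:
  assumes "A \<in> sl_h" "B \<in> sl_h"
  shows "sl_theta \<alpha> A B = 0"
proof -
  have "(mbr A B *v axis lastidx 1) $ \<alpha> = 0"
    using mbr_sl_h_mult_axis[OF assms] by simp
  then show ?thesis
    by (simp add: sl_theta_def matrix_vector_mult_axis_nth)
qed

lemma sl_theta_nondegenerate:
  fixes A :: "((real, 'n::{finite,linorder}) vec, 'n) vec"
  assumes A: "A \<in> sl" and ker: "\<forall>\<alpha>. \<forall>B\<in>sl. sl_theta \<alpha> A B = 0"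
  shows "A = 0"
proof -
  let ?n = "lastidx :: 'n"
  have col_n: "mbr A (matrix_unit i j) $ a $ ?n = 0" if "i \<noteq> j" for i j a
    using ker that by (simp add: sl_theta_def sl_def trace_matrix_unit)
  have off_diagonal: "A $ a $ b = 0" if "a \<noteq> b" for a b
  proof (cases "b = ?n")
    case True
    then show ?thesis
      using col_n[of ?n a ?n] that by (simp add: mbr_matrix_unit_nth)
  next
    case False
    then show ?thesis
      using col_n[of b ?n a] that by (simp add: mbr_matrix_unit_nth)
  qed
  have diagonal: "A $ b $ b = A $ ?n $ ?n" for b
    using col_n[of b ?n b] by (cases "b = ?n") (simp_all add: mbr_matrix_unit_nth)
  have "trace A = (\<Sum>b\<in>(UNIV :: 'n set). A $ ?n $ ?n)"
    unfolding trace_def by (rule sum.cong[OF refl diagonal])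
  then have "trace A = of_nat CARD('n) * A $ ?n $ ?n"
    by simp
  then have "A $ ?n $ ?n = 0"
    using A by (simp add: sl_def)
  then show ?thesis
    by (metis vec_eq_iff off_diagonal diagonal zero_index)
qed

theorem mainTheorem10:
  assumes "CARD('n::{finite,linorder}) \<ge> 2"
  shows "k_symplectic (sl :: ((real, 'n) vec, 'n) vec set) mbr CARD('n) sl_h sl_theta (UNIV :: 'n set)"
proof -
  let ?N = "CARD('n)"
  have dims: "dim (sl :: ((real, 'n) vec, 'n) vec set) = (?N - 1) * (?N + 1)"
    "dim (sl_h :: ((real, 'n) vec, 'n) vec set) = (?N - 1) * ?N"
    using assms by (simp_all add: dim_sl dim_sl_h algebra_simps diff_mult_distrib)
  have "(\<Inter>\<alpha>. form_kernel sl (sl_theta \<alpha>)) = {0::((real, 'n) vec, 'n) vec}"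
    using sl_theta_nondegenerate subspace_0[OF subspace_sl]
    by (auto simp: form_kernel_def sl_theta_def mbr_def)
  moreover have "skew_bilinear_on sl (sl_theta \<alpha>)" "is_2cocycle sl mbr (sl_theta \<alpha>)"
    for \<alpha> :: 'n
    using skew_bilinear_on_coboundary[OF is_lie_algebra_sl linear_neg_entry]
      is_2cocycle_coboundary[OF is_lie_algebra_sl linear_neg_entry]
    by (simp_all add: sl_theta_def[abs_def])
  ultimately show ?thesis
    unfolding k_symplectic_def
    using assms dims is_lie_algebra_sl lie_subalgebra_sl_h sl_theta_sl_h
    by (auto intro!: exI[of _ "?N - 1"])
qed

end
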